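(* Let $p$ be a prime, identify $V=\mathbb{F}_p^d$ with $\mathbb{F}_{p^d}$, let $\omega$ be a primitive element of $\mathbb{F}_{p^d}$, let $\hat\omega$ be the map $x\mapsto x\omega$ and $\varphi$ the map $x\mapsto x^p$, so $\Gamma L_1(p^d)=\langle\hat\omega,\varphi\rangle$. Suppose $H\le\Gamma L_1(p^d)$ is $p$-exceptional on $V$. Then $p$ divides $d$, and there is a factorisation $d=p^ks$ with $k\ge1$ and an integer $j$ dividing $p^s-1$ such that $K=\langle\hat\omega^{(p^s-1)/j},\varphi^s\rangle$ is a normal subgroup of $H$ of index coprime to $p$. Conversely, for any such $d=p^ks$ ($k\ge1$) and $j\mid p^s-1$, the group $K=\langle\hat\omega^{(p^s-1)/j},\varphi^s\rangle$ is $p$-exceptional and $\frac12$-transitive on $V^\sharp$, having $(p^s-1)/j$ orbits on $V^\sharp$, each of length $j(p^d-1)/(p^s-1)$; any subgroup of $\Gamma L_1(p^d)$ containing such a $K$ with index coprime to $p$ and meeting $\langle\hat\omega\rangle$ in $K\cap\langle\hat\omega\rangle$ is $p$-exceptional; and each such $K$ contains the $p$-exceptional group $\langle\hat\omega^{p^{d/p}-1},\varphi^{d/p}\rangle$.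
   Context: $G$ is $p$-exceptional on $V$ if $p$ divides $|G|$ and every orbit of $G$ on $V$ has size coprime to $p$. $V^\sharp$ is the set of nonzero vectors. $G$ is $\frac12$-transitive if all its orbits on $V^\sharp$ have equal size. *)

theory Defs
  imports "HOL-Algebra.Algebra"
begin

text \<open>The vector space V = F_p^d is identified with a finite field of type 'a
  of cardinality p^d. Semilinear maps are represented as functions 'a => 'a,
  with group operation composition.\<close>

text \<open>Subgroup (of the permutations of 'a) generated by a set S of maps:
  closure of S under composition, containing the identity.  For bijections of a
  finite set this is the generated group.\<close>
inductive_set gen :: "('a \<Rightarrow> 'a) set \<Rightarrow> ('a \<Rightarrow> 'a) set" for S where
  gen_id: "id \<in> gen S"
| gen_comp: "f \<in> S \<Longrightarrow> g \<in> gen S \<Longrightarrow> f \<circ> g \<in> gen S"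

definition fgroup :: "('a \<Rightarrow> 'a) set \<Rightarrow> ('a \<Rightarrow> 'a) monoid" where
  "fgroup H = \<lparr>carrier = H, monoid.mult = (\<circ>), one = id\<rparr>"

definition primitive_element :: "'a::field \<Rightarrow> bool" where
  "primitive_element w \<longleftrightarrow> w \<noteq> 0 \<and> (\<forall>x. x \<noteq> 0 \<longrightarrow> (\<exists>n::nat. x = w ^ n))"

definition omega_hat :: "'a::field \<Rightarrow> 'a \<Rightarrow> 'a" where
  "omega_hat w = (\<lambda>x. x * w)"

definition frob :: "nat \<Rightarrow> 'a::field \<Rightarrow> 'a" where
  "frob p = (\<lambda>x. x ^ p)"

definition GammaL1 :: "nat \<Rightarrow> 'a::field \<Rightarrow> ('a \<Rightarrow> 'a) set" where
  "GammaL1 p w = gen {omega_hat w, frob p}"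

definition orbit :: "('a \<Rightarrow> 'a) set \<Rightarrow> 'a \<Rightarrow> 'a set" where
  "orbit H v = {h v | h. h \<in> H}"

definition p_exceptional :: "nat \<Rightarrow> ('a \<Rightarrow> 'a) set \<Rightarrow> bool" where
  "p_exceptional p H \<longleftrightarrow> p dvd card H \<and> (\<forall>v. coprime (card (orbit H v)) p)"

definition half_transitive :: "('a::zero \<Rightarrow> 'a) set \<Rightarrow> bool" where
  "half_transitive H \<longleftrightarrow>
     (\<forall>u v. u \<noteq> 0 \<longrightarrow> v \<noteq> 0 \<longrightarrow> card (orbit H u) = card (orbit H v))"

definition nonzero_orbits :: "('a::zero \<Rightarrow> 'a) set \<Rightarrow> 'a set set" where
  "nonzero_orbits H = {orbit H v | v. v \<noteq> 0}"

end

theory Submission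
  imports Defs "HOL-Algebra.Group_Action"
begin

text \<open>
  Let F be the field of order p^d with primitive element w and N = p^d - 1.
  Every element of GammaL1 is a map T a i sending x to w^a * x^(p^i); it determines a modulo N and
  i modulo d, and T a i o T b j = T (a + p^i b) (i + j).  The candidate subgroups are
  Kgrp m s = {T (m a) (s b)}, generated by multiplication with w^m and the s-th Frobenius power.

  For d = p^k s with k >= 1 and m | p^s - 1, the orbit of w^t under Kgrp m s is the set of powers
  w^u with u = t modulo m.  This gives the orbit lengths N/m, the m nonzero orbits and, with the
  order (N/m)(d/s), the converse half of the theorem.

  For a p-exceptional H the stabiliser of 1 consists of Frobenius powers; it gives d = p^k s with
  T 0 s in H.  The stabiliser of w then contains a twisted Frobenius power T alpha s, which forces
  m | p^s - 1 for the scalar part w^m of H.  Finally Kgrp m s = H intersected with Kgrp 1 s is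
  normal in H of index prime to p.
\<close>

lemma carrier_fgroup [simp]: "carrier (fgroup H) = H"
  and mult_fgroup [simp]: "x \<otimes>\<^bsub>fgroup H\<^esub> y = x \<circ> y"
  and one_fgroup [simp]: "\<one>\<^bsub>fgroup H\<^esub> = id"
  and fgroup_restrict [simp]: "(fgroup G)\<lparr>carrier := H\<rparr> = fgroup H"
  by (simp_all add: fgroup_def)

lemma gen_least:
  assumes "id \<in> C" "S \<subseteq> C" "\<And>f g. f \<in> C \<Longrightarrow> g \<in> C \<Longrightarrow> f \<circ> g \<in> C"
  shows "gen S \<subseteq> C"
proof
  fix f assume "f \<in> gen S"
  then show "f \<in> C" by induction (use assms in blast)+
qed

text \<open>Elements of a group of maps (under composition) are bijections, so such a group acts
  on the whole type; this gives orbit-stabiliser and stabiliser subgroups.\<close>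
lemma fgroup_bij:
  assumes "group (fgroup H)" "h \<in> H"
  shows "bij h"
proof -
  interpret group "fgroup H" by fact
  have "inv\<^bsub>fgroup H\<^esub> h \<circ> h = id" "h \<circ> inv\<^bsub>fgroup H\<^esub> h = id"
    using l_inv r_inv assms(2) by auto
  then show ?thesis by (rule o_bij)
qed

lemma fgroup_action:
  assumes "group (fgroup H)"
  shows "group_action (fgroup H) UNIV (\<lambda>h. h)"
  unfolding group_action_def
  using fgroup_bij[OF assms]
  by (intro group_hom.intro[OF assms group_BijGroup] group_hom_axioms.intro)
     (auto simp: hom_def BijGroup_def Bij_def compose_def restrict_UNIV bij_betw_def)

lemma orbit_stabilizer:
  assumes "group (fgroup H)" "finite H"
  shows "card (orbit H v) * card {h \<in> H. h v = v} = card H"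
  using group_action.orbit_stabilizer_theorem[OF fgroup_action[OF assms(1)], of v]
  by (simp add: Group_Action.orbit_def orbit_def stabilizer_def order_def)

lemma stabilizer_subgroup_fgroup:
  assumes "group (fgroup H)"
  shows "subgroup {h \<in> H. h v = v} (fgroup H)"
  using group_action.stabilizer_subgroup[OF fgroup_action[OF assms], of v]
  by (simp add: stabilizer_def)

lemma card_subgroup_dvd:
  assumes "group (fgroup L)" "subgroup K (fgroup L)"
  shows "card K dvd card L"
  using group.lagrange[OF assms] by (metis carrier_fgroup dvd_triv_right order_def)

text \<open>Since the orbits of a p-exceptional group have length prime to p, every stabiliser
  contains the full p-part of the group order.\<close>
lemma exceptional_stabilizer_p_part:
  assumes "p_exceptional p H" "group (fgroup H)" "finite H" "p ^ k dvd card H"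
  shows "p ^ k dvd card {h \<in> H. h v = v}"
proof -
  have "coprime (p ^ k) (card (orbit H v))"
    using assms(1) unfolding p_exceptional_def by (simp add: coprime_commute)
  moreover have "p ^ k dvd card (orbit H v) * card {h \<in> H. h v = v}"
    using assms(4) orbit_stabilizer[OF assms(2,3)] by simp
  ultimately show ?thesis by (simp add: coprime_dvd_mult_right_iff)
qed

lemma card_stabilizer_dvd:
  assumes L: "group (fgroup L)" and K: "subgroup K (fgroup L)"
  shows "card {h \<in> K. h v = v} dvd card {h \<in> L. h v = v}"
proof -
  interpret L: group "fgroup L" by (rule L)
  define SL where "SL = {h \<in> L. h v = v}"
  have SL: "subgroup SL (fgroup L)" unfolding SL_def by (rule stabilizer_subgroup_fgroup[OF L])
  have "{h \<in> K. h v = v} = K \<inter> SL" unfolding SL_def using L.subgroupE(1)[OF K] by auto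
  then have "subgroup {h \<in> K. h v = v} (fgroup SL)"
    using L.subgroup_incl[OF L.subgroups_Inter_pair[OF K SL] SL] by simp
  then show ?thesis using card_subgroup_dvd L.subgroup_imp_group[OF SL] unfolding SL_def by simp
qed

text \<open>An overgroup L of a p-exceptional group K with index prime to p is p-exceptional: by
  orbit-stabiliser, |orbit_L v| divides [L:K] * |orbit_K v|.\<close>
lemma exceptional_overgroup:
  assumes L: "group (fgroup L)" "finite L" and K: "subgroup K (fgroup L)"
    and index: "coprime (card L div card K) p" and exc: "p_exceptional p K"
  shows "p_exceptional p L"
  unfolding p_exceptional_def
proof
  interpret L: group "fgroup L" by (rule L(1))
  have "card K dvd card L" using card_subgroup_dvd[OF L(1) K] .
  then show "p dvd card L" using exc dvd_trans unfolding p_exceptional_def by blast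
  have K_grp: "group (fgroup K)" "finite K"
    using L.subgroup_imp_group[OF K] finite_subset[OF L.subgroupE(1)[OF K]] L(2) by auto
  show "\<forall>v. coprime (card (orbit L v)) p"
  proof
    fix v
    define SL SK where "SL = {h \<in> L. h v = v}" and "SK = {h \<in> K. h v = v}"
    obtain u where u: "card SL = card SK * u"
      using card_stabilizer_dvd[OF L(1) K] unfolding SL_def SK_def by blast
    have oL: "card (orbit L v) * card SL = card L"
      unfolding SL_def by (rule orbit_stabilizer[OF L])
    have oK: "card (orbit K v) * card SK = card K"
      unfolding SK_def by (rule orbit_stabilizer[OF K_grp])
    have "card (orbit L v) * u * card SK = (card L div card K) * card (orbit K v) * card SK"
      using oL oK u \<open>card K dvd card L\<close> by (metis dvd_div_mult_self mult.assoc mult.commute)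
    moreover have "id \<in> SK" using subgroup.one_closed[OF K] unfolding SK_def by simp
    then have "card SK \<noteq> 0" using K_grp(2) unfolding SK_def by (auto simp: card_eq_0_iff)
    ultimately have "card (orbit L v) dvd (card L div card K) * card (orbit K v)"
      by (metis dvd_triv_left mult_right_cancel)
    moreover have "coprime ((card L div card K) * card (orbit K v)) p"
      using index exc unfolding p_exceptional_def by simp
    ultimately show "coprime (card (orbit L v)) p" by (rule coprime_divisors[OF _ dvd_refl])
  qed
qed

text \<open>The
  divisor r is the least positive element; closure under subtraction comes from periodicity.\<close>
lemma periodic_additive_set:
  fixes n :: nat
  assumes n: "n > 0" and zero: "P 0" and add: "\<And>x y. P x \<Longrightarrow> P y \<Longrightarrow> P (x + y)"
    and periodic: "\<And>x. P x \<longleftrightarrow> P (x mod n)"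
  shows "\<exists>r>0. r dvd n \<and> (\<forall>x. P x \<longleftrightarrow> r dvd x)"
proof -
  have mult: "P (c * x)" if "P x" for c x
    by (induction c) (use zero add that in auto)
  have sub: "P (x - y)" if "P x" "P y" "y \<le> x" for x y
  proof -
    have "x + (n - 1) * y = (x - y) + n * y"
      using n that(3) by (simp add: diff_mult_distrib)
    then have "(x + (n - 1) * y) mod n = (x - y) mod n" by simp
    then show ?thesis using add[OF that(1) mult[OF that(2)]] periodic by metis
  qed
  have "P n" using periodic[of n] zero by (metis mod_self)
  define r where "r = (LEAST x. 0 < x \<and> P x)"
  have r: "0 < r" "P r" using LeastI[of "\<lambda>x. 0 < x \<and> P x", OF conjI[OF n \<open>P n\<close>]]
    unfolding r_def by auto
  have r_min: "\<not> P x" if "0 < x" "x < r" for x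
    using not_less_Least[of x "\<lambda>x. 0 < x \<and> P x"] that unfolding r_def by auto
  have "P x \<longleftrightarrow> r dvd x" for x
  proof
    assume "P x"
    have "x - (x div r) * r = x mod r" by (simp add: minus_div_mult_eq_mod)
    then have "P (x mod r)" using sub[OF \<open>P x\<close> mult[OF r(2)] div_times_less_eq_dividend] by simp
    then show "r dvd x" using r_min[of "x mod r"] r(1) by (auto simp: dvd_eq_mod_eq_0)
  next
    assume "r dvd x"
    then show "P x" using mult[OF r(2)] by (auto elim!: dvdE simp: mult.commute)
  qed
  with r(1) \<open>P n\<close> show ?thesis by blast
qed

lemma card_residue_class:
  fixes n m c :: nat
  assumes "m dvd n" "c < m"
  shows "card {u. u < n \<and> u mod m = c} = n div m"
proof -
  have "{u. u < n \<and> u mod m = c} = (\<lambda>q. m * q + c) ` {..<n div m}"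
  proof (rule Set.set_eqI)
    fix u
    have "u < n \<and> u mod m = c \<longleftrightarrow> (\<exists>q < n div m. u = m * q + c)"
    proof
      assume u: "u < n \<and> u mod m = c"
      then have "u = m * (u div m) + c" by (metis div_mult_mod_eq mult.commute)
      moreover have "u div m < n div m"
        using u assms by (metis div_less_iff_less_mult dvd_div_mult_self gr_implies_not0 gr0I)
      ultimately show "\<exists>q < n div m. u = m * q + c" by blast
    next
      assume "\<exists>q < n div m. u = m * q + c"
      then obtain q where q: "u = m * q + c" "Suc q \<le> n div m" using Suc_leI by blast
      then have "m * Suc q \<le> n" using assms(1) by (metis dvd_mult_div_cancel mult_le_mono2)
      then show "u < n \<and> u mod m = c" using q assms(2) by simp
    qed
    then show "u \<in> {u. u < n \<and> u mod m = c} \<longleftrightarrow> u \<in> (\<lambda>q. m * q + c) ` {..<n div m}"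
      by auto
  qed
  moreover have "inj_on (\<lambda>q. m * q + c) {..<n div m}" using assms(2) by (auto simp: inj_on_def)
  ultimately show ?thesis by (simp add: card_image)
qed

lemma pred_dvd_pred_power: "(x::nat) - 1 dvd x ^ b - 1"
proof (cases "x = 0")
  case True then show ?thesis by (cases b) auto
next
  case False
  show ?thesis
  proof (induction b)
    case (Suc b)
    have "x ^ Suc b - 1 = x * (x ^ b - 1) + (x - 1)"
      using False by (simp add: right_diff_distrib' Suc_le_eq)
    then show ?case using Suc by simp
  qed simp
qed

lemma divisor_quotient:
  fixes m n :: nat
  assumes "m dvd n" "n > 0"
  shows "n div m dvd n" "n div (n div m) = m"
  using assms by (auto elim!: dvdE)

locale frobenius_field =
  fixes p d :: nat and w :: "'a::{field, finite}"
  assumes prime: "Factorial_Ring.prime p" and card_field: "card (UNIV :: 'a set) = p ^ d"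
    and primitive: "primitive_element w"
begin

definition N :: nat where "N = p ^ d - 1"

definition T :: "nat \<Rightarrow> nat \<Rightarrow> 'a \<Rightarrow> 'a" where
  "T a i = (\<lambda>x. w ^ a * x ^ (p ^ i))"

definition G :: "('a \<Rightarrow> 'a) set" where "G = {T a i | a i. True}"

definition Kgrp :: "nat \<Rightarrow> nat \<Rightarrow> ('a \<Rightarrow> 'a) set" where
  "Kgrp m s = {T (m * a) (s * b) | a b. True}"

lemma p_ge2: "p \<ge> 2"
  using prime prime_ge_2_nat by blast

lemma d_pos: "d > 0"
proof (rule ccontr)
  assume "\<not> d > 0"
  then have "card (UNIV :: 'a set) = 1" using card_field by simp
  then obtain x :: 'a where "UNIV = {x}" by (rule card_1_singletonE)
  then show False by (metis UNIV_I singletonD zero_neq_one)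
qed

lemma card_nonzero: "card {x :: 'a. x \<noteq> 0} = N"
proof -
  have "{x :: 'a. x \<noteq> 0} = UNIV - {0}" by auto
  then show ?thesis unfolding N_def using card_field by (simp add: card_Diff_singleton)
qed

lemma N_pos: "N > 0"
  using p_ge2 d_pos one_less_power[of p d] unfolding N_def by simp

lemma coprime_N: "coprime N p"
  using coprime_diff_one_left_nat[of "p ^ d"] p_ge2 d_pos unfolding N_def by simp

lemma w_nonzero: "w \<noteq> 0"
  using primitive unfolding primitive_element_def by simp

lemma nonzero_is_power: "x \<noteq> 0 \<Longrightarrow> \<exists>n. x = w ^ n"
  using primitive unfolding primitive_element_def by simp

text \<open>Multiplying by w permutes the nonzero elements, so comparing the products of all
  nonzero elements before and after gives w^N = 1.\<close>
lemma w_pow_N: "w ^ N = 1"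
proof -
  let ?U = "{x :: 'a. x \<noteq> 0}"
  have "bij_betw (\<lambda>x. w * x) ?U ?U"
    using w_nonzero by (intro bij_betwI[of _ _ _ "\<lambda>x. x / w"]) auto
  then have "(\<Prod>x\<in>?U. x) = (\<Prod>x\<in>?U. w * x)"
    by (rule prod.reindex_bij_betw[symmetric])
  also have "\<dots> = w ^ N * (\<Prod>x\<in>?U. x)" by (simp add: prod.distrib card_nonzero)
  finally show ?thesis by (simp add: prod_zero_iff)
qed

lemma w_pow_mod: "w ^ n = w ^ (n mod N)"
proof -
  have "w ^ n = (w ^ N) ^ (n div N) * w ^ (n mod N)"
    by (metis div_mult_mod_eq power_add power_mult mult.commute)
  then show ?thesis by (simp add: w_pow_N)
qed

lemma nonzero_eq_powers: "{x :: 'a. x \<noteq> 0} = (\<lambda>n. w ^ n) ` {..<N}"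
proof
  show "{x. x \<noteq> 0} \<subseteq> (\<lambda>n. w ^ n) ` {..<N}"
  proof
    fix x :: 'a assume "x \<in> {x. x \<noteq> 0}"
    then obtain n where "x = w ^ (n mod N)" using nonzero_is_power w_pow_mod by auto
    then show "x \<in> (\<lambda>n. w ^ n) ` {..<N}" using N_pos by simp
  qed
qed (auto simp: w_nonzero)

lemma w_pow_inj: "inj_on (\<lambda>n. w ^ n) {..<N}"
  using card_nonzero nonzero_eq_powers by (simp add: inj_on_iff_eq_card)

lemma w_pow_eq_iff: "w ^ a = w ^ b \<longleftrightarrow> a mod N = b mod N"
proof
  assume "w ^ a = w ^ b"
  then have "w ^ (a mod N) = w ^ (b mod N)" using w_pow_mod by metis
  then show "a mod N = b mod N" using inj_onD[OF w_pow_inj] N_pos by simp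
qed (metis w_pow_mod)

lemma pow_card_field: "(x :: 'a) ^ (p ^ d) = x"
proof (cases "x = 0")
  case True then show ?thesis using p_ge2 by simp
next
  case False
  then obtain n where x: "x = w ^ n" using nonzero_is_power by blast
  have "p ^ d = N + 1" using p_ge2 unfolding N_def by simp
  then have "x ^ (p ^ d) = (w ^ N) ^ n * w ^ n"
    unfolding x by (simp add: power_add flip: power_mult) (simp add: mult.commute power_mult)
  then show ?thesis by (simp add: w_pow_N x)
qed

lemma pow_p_pow_mod: "(x :: 'a) ^ (p ^ i) = x ^ (p ^ (i mod d))"
proof -
  have "x ^ (p ^ (d * q)) = x" for q
    by (induction q) (simp_all add: power_add power_mult pow_card_field)
  then show ?thesis
    by (metis div_mult_mod_eq mult.commute power_add power_mult)
qed

lemma T_comp: "T a i \<circ> T b j = T (a + p ^ i * b) (i + j)"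
  by (auto simp: T_def power_mult_distrib power_add mult.commute mult.left_commute
           simp flip: power_mult)

lemma T_id: "T 0 0 = id"
  by (auto simp: T_def)

lemma T_zero: "T a i 0 = 0"
  using p_ge2 by (simp add: T_def)

lemma T_power: "T a i (w ^ t) = w ^ (a + t * p ^ i)"
  by (simp add: T_def power_add power_mult)

lemma T_mod: "T a i = T (a mod N) (i mod d)"
  unfolding T_def using w_pow_mod[of a] pow_p_pow_mod by metis

lemma p_pow_less_N: "i < d \<Longrightarrow> 2 \<le> d \<Longrightarrow> p ^ i < N"
proof -
  assume "i < d" "2 \<le> d"
  have "p ^ i \<le> p ^ (d - 1)" using \<open>i < d\<close> p_ge2 by (intro power_increasing) auto
  moreover have "2 \<le> p ^ (d - 1)"
    using \<open>2 \<le> d\<close> p_ge2 power_increasing[of 1 "d - 1" p] by fastforce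
  moreover have "p ^ d = p * p ^ (d - 1)" using d_pos by (simp flip: power_Suc)
  ultimately show "p ^ i < N" unfolding N_def using p_ge2 mult_le_mono1[of 2 p "p ^ (d - 1)"]
    by linarith
qed

lemma T_eq_iff: "T a i = T b j \<longleftrightarrow> a mod N = b mod N \<and> i mod d = j mod d"
proof
  assume eq: "T a i = T b j"
  have "w ^ a = w ^ b" using fun_cong[OF eq, of 1] by (simp add: T_def)
  then have scalar: "a mod N = b mod N" by (simp add: w_pow_eq_iff)
  have "w ^ a * w ^ (p ^ i) = w ^ b * w ^ (p ^ j)" using fun_cong[OF eq, of w] by (simp add: T_def)
  then have "w ^ (p ^ (i mod d)) = w ^ (p ^ (j mod d))"
    using \<open>w ^ a = w ^ b\<close> w_nonzero pow_p_pow_mod by (metis mult_left_cancel power_not_zero)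
  then have "p ^ (i mod d) mod N = p ^ (j mod d) mod N" by (simp add: w_pow_eq_iff)
  moreover have "2 \<le> d \<Longrightarrow> p ^ (i mod d) < N \<and> p ^ (j mod d) < N"
    using p_pow_less_N d_pos by simp
  ultimately have "d = 1 \<or> p ^ (i mod d) = p ^ (j mod d)" using d_pos by fastforce
  then have "i mod d = j mod d" using p_ge2 by (auto simp: power_inject_exp)
  with scalar show "a mod N = b mod N \<and> i mod d = j mod d" ..
next
  assume "a mod N = b mod N \<and> i mod d = j mod d"
  then show "T a i = T b j" by (metis T_mod)
qed

lemma omega_hat_pow: "omega_hat w ^^ n = T n 0"
proof (induction n)
  case (Suc n)
  have "omega_hat w = T 1 0" by (auto simp: omega_hat_def T_def mult.commute)
  with Suc show ?case by (simp add: T_comp)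
qed (simp add: T_id)

lemma frob_pow: "frob p ^^ n = T 0 n"
proof (induction n)
  case (Suc n)
  have "frob p = T 0 1" by (auto simp: frob_def T_def)
  with Suc show ?case by (simp add: T_comp)
qed (simp add: T_id)

lemma Kgrp_id: "id \<in> Kgrp m s"
  unfolding Kgrp_def by (metis (mono_tags) T_id mult_0_right mem_Collect_eq)

lemma Kgrp_comp: "f \<in> Kgrp m s \<Longrightarrow> g \<in> Kgrp m s \<Longrightarrow> f \<circ> g \<in> Kgrp m s"
proof -
  assume "f \<in> Kgrp m s" "g \<in> Kgrp m s"
  then obtain a b a' b' where "f = T (m * a) (s * b)" "g = T (m * a') (s * b')"
    unfolding Kgrp_def by blast
  then have "f \<circ> g = T (m * (a + p ^ (s * b) * a')) (s * (b + b'))"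
    by (simp add: T_comp algebra_simps)
  then show "f \<circ> g \<in> Kgrp m s" unfolding Kgrp_def by blast
qed

lemma G_eq_Kgrp: "G = Kgrp 1 1"
  by (simp add: G_def Kgrp_def)

lemma gen_T: "gen {T m 0, T 0 s} = Kgrp m s"
proof
  show "gen {T m 0, T 0 s} \<subseteq> Kgrp m s"
  proof (rule gen_least[OF Kgrp_id _ Kgrp_comp])
    show "{T m 0, T 0 s} \<subseteq> Kgrp m s"
      unfolding Kgrp_def by (metis (mono_tags) empty_subsetI insert_subset mem_Collect_eq
          mult_0_right mult_1_right)
  qed
next
  have frob: "T 0 (s * b) \<in> gen {T m 0, T 0 s}" for b
  proof (induction b)
    case (Suc b)
    then have "T 0 s \<circ> T 0 (s * b) \<in> gen {T m 0, T 0 s}" by (intro gen_comp) auto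
    then show ?case by (simp add: T_comp)
  qed (metis T_id gen_id mult_0_right)
  have "T (m * a) (s * b) \<in> gen {T m 0, T 0 s}" for a b
  proof (induction a)
    case (Suc a)
    then have "T m 0 \<circ> T (m * a) (s * b) \<in> gen {T m 0, T 0 s}" by (intro gen_comp) auto
    then show ?case by (simp add: T_comp)
  qed (simp add: frob)
  then show "Kgrp m s \<subseteq> gen {T m 0, T 0 s}" unfolding Kgrp_def by blast
qed

lemma GammaL1_eq: "GammaL1 p w = G"
  unfolding GammaL1_def G_eq_Kgrp omega_hat_pow[of 1, simplified] frob_pow[of 1, simplified] gen_T
  by simp

text \<open>An explicit left inverse; its Frobenius exponent d - i mod d and its scalar exponent
  are multiples of those of T a i whenever the former divide d.\<close>
lemma T_left_inverse: "T ((N - 1) * p ^ (d - i mod d) * a) (d - i mod d) \<circ> T a i = id"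
proof -
  have "(N - 1) * p ^ (d - i mod d) * a + p ^ (d - i mod d) * a = N * (p ^ (d - i mod d) * a)"
    using N_pos by (simp add: algebra_simps)
  moreover have "(d - i mod d + i) mod d = 0"
    using d_pos by (metis mod_add_right_eq le_add_diff_inverse2 mod_less_divisor mod_self less_imp_le)
  ultimately show ?thesis by (simp add: T_comp T_eq_iff flip: T_id)
qed

lemma group_G: "group (fgroup G)"
proof (rule groupI)
  show "x \<otimes>\<^bsub>fgroup G\<^esub> y \<in> carrier (fgroup G)" if "x \<in> carrier (fgroup G)" "y \<in> carrier (fgroup G)" for x y
    using that Kgrp_comp unfolding G_eq_Kgrp by simp
  show "\<one>\<^bsub>fgroup G\<^esub> \<in> carrier (fgroup G)" using Kgrp_id unfolding G_eq_Kgrp by simp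
  show "\<exists>y\<in>carrier (fgroup G). y \<otimes>\<^bsub>fgroup G\<^esub> x = \<one>\<^bsub>fgroup G\<^esub>" if "x \<in> carrier (fgroup G)" for x
    using that T_left_inverse unfolding G_def by auto
qed (auto simp: comp_assoc)

lemma Kgrp_subgroup:
  assumes "s dvd d"
  shows "subgroup (Kgrp m s) (fgroup G)"
proof -
  interpret G: group "fgroup G" by (rule group_G)
  show ?thesis
  proof (rule G.subgroupI)
    show "Kgrp m s \<subseteq> carrier (fgroup G)" unfolding Kgrp_def G_def by auto
    show "Kgrp m s \<noteq> {}" using Kgrp_id by auto
    show "a \<otimes>\<^bsub>fgroup G\<^esub> b \<in> Kgrp m s" if "a \<in> Kgrp m s" "b \<in> Kgrp m s" for a b
      using that Kgrp_comp by simp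
  next
    fix f assume "f \<in> Kgrp m s"
    then obtain a b where f: "f = T (m * a) (s * b)" unfolding Kgrp_def by blast
    let ?j = "d - s * b mod d"
    have "s dvd ?j" using assms by (simp add: dvd_diff_nat dvd_mod)
    then obtain c where c: "?j = s * c" by blast
    let ?g = "T ((N - 1) * p ^ ?j * (m * a)) ?j"
    have "?g \<circ> f = id" unfolding f by (rule T_left_inverse)
    then have "inv\<^bsub>fgroup G\<^esub> f = ?g"
      using f by (intro G.inv_equality) (auto simp: G_def)
    also have "?g = T (m * ((N - 1) * p ^ ?j * a)) (s * c)" using c by (simp add: ac_simps)
    finally show "inv\<^bsub>fgroup G\<^esub> f \<in> Kgrp m s" unfolding Kgrp_def by blast
  qed
qed

lemma subgroupD:
  assumes "subgroup H (fgroup G)"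
  shows "H \<subseteq> G" "group (fgroup H)" "finite H" "id \<in> H" "\<And>f g. f \<in> H \<Longrightarrow> g \<in> H \<Longrightarrow> f \<circ> g \<in> H"
  using subgroup.subset[OF assms] group.subgroup_imp_group[OF group_G assms]
    subgroup.one_closed[OF assms] subgroup.m_closed[OF assms] by auto

lemma orbit_zero:
  assumes "id \<in> H" "H \<subseteq> G"
  shows "orbit H 0 = {0}"
proof -
  have "h 0 = 0" if "h \<in> H" for h using that assms(2) T_zero unfolding G_def by auto
  then show ?thesis using assms(1) unfolding orbit_def by (auto intro!: exI[of _ id])
qed

context
  fixes m s :: nat
  assumes m_dvd: "m dvd p ^ s - 1" and s_dvd: "s dvd d"
begin

lemma s_pos: "s > 0"
  using s_dvd d_pos by (cases s) auto

lemma p_pow_s_pos: "p ^ s - 1 > 0"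
  using p_ge2 s_pos one_less_power[of p s] by simp

lemma m_dvd_p_pow: "m dvd p ^ (s * b) - 1"
  using m_dvd pred_dvd_pred_power[of "p ^ s" b] by (auto simp: power_mult intro: dvd_trans)

lemma m_dvd_N: "m dvd N"
  using m_dvd_p_pow[of "d div s"] s_dvd unfolding N_def by simp

lemma m_pos: "m > 0"
  using m_dvd_N N_pos by (cases m) auto

text \<open>Kgrp m s is in bijection with pairs (a, i), a < N a multiple of m, i < d a multiple of s.\<close>
lemma card_Kgrp: "card (Kgrp m s) = N div m * (d div s)"
proof -
  let ?A = "{a. a < N \<and> a mod m = 0}" and ?I = "{i. i < d \<and> i mod s = 0}"
  have "Kgrp m s = (\<lambda>(a, i). T a i) ` (?A \<times> ?I)"
  proof
    show "Kgrp m s \<subseteq> (\<lambda>(a, i). T a i) ` (?A \<times> ?I)"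
    proof
      fix f assume "f \<in> Kgrp m s"
      then obtain a b where "f = T (m * a) (s * b)" unfolding Kgrp_def by blast
      then have "f = T ((m * a) mod N) ((s * b) mod d)" using T_mod by simp
      moreover have "(m * a) mod N \<in> ?A" "(s * b) mod d \<in> ?I"
        using m_dvd_N s_dvd N_pos d_pos by (auto simp: mod_mod_cancel)
      ultimately show "f \<in> (\<lambda>(a, i). T a i) ` (?A \<times> ?I)" by auto
    qed
    show "(\<lambda>(a, i). T a i) ` (?A \<times> ?I) \<subseteq> Kgrp m s"
      unfolding Kgrp_def by (auto elim!: dvdE simp: dvd_eq_mod_eq_0[symmetric])
  qed
  moreover have "inj_on (\<lambda>(a, i). T a i) (?A \<times> ?I)"
    by (auto simp: inj_on_def T_eq_iff)
  moreover have "card ?A = N div m" "card ?I = d div s"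
    using card_residue_class[OF m_dvd_N m_pos] card_residue_class[OF s_dvd s_pos] by auto
  ultimately show ?thesis by (simp add: card_image card_cartesian_product)
qed

text \<open>The orbit of w^t consists of the powers w^u with u congruent to t modulo m: the
  Frobenius part of the group fixes exponents modulo m, since m divides p^s - 1.\<close>
lemma orbit_Kgrp_power:
  "orbit (Kgrp m s) (w ^ t) = (\<lambda>u. w ^ u) ` {u. u < N \<and> u mod m = t mod m}"
proof
  show "orbit (Kgrp m s) (w ^ t) \<subseteq> (\<lambda>u. w ^ u) ` {u. u < N \<and> u mod m = t mod m}"
  proof
    fix x assume "x \<in> orbit (Kgrp m s) (w ^ t)"
    then obtain a b where x: "x = w ^ (m * a + t * p ^ (s * b))"
      unfolding orbit_def Kgrp_def by (auto simp: T_power)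
    obtain k where "p ^ (s * b) = 1 + m * k"
      using m_dvd_p_pow[of b] p_ge2 by (metis dvdE le_add_diff_inverse one_le_power order_trans one_le_numeral)
    then have "m * a + t * p ^ (s * b) = t + m * (a + t * k)" by (simp add: algebra_simps)
    then have "(m * a + t * p ^ (s * b)) mod N mod m = t mod m"
      by (simp add: mod_mod_cancel[OF m_dvd_N])
    moreover have "x = w ^ ((m * a + t * p ^ (s * b)) mod N)" using x w_pow_mod by simp
    ultimately show "x \<in> (\<lambda>u. w ^ u) ` {u. u < N \<and> u mod m = t mod m}"
      using N_pos by (intro image_eqI) auto
  qed
  show "(\<lambda>u. w ^ u) ` {u. u < N \<and> u mod m = t mod m} \<subseteq> orbit (Kgrp m s) (w ^ t)"
  proof
    fix x assume "x \<in> (\<lambda>u. w ^ u) ` {u. u < N \<and> u mod m = t mod m}"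
    then obtain u where u: "x = w ^ u" "u mod m = t mod m" by blast
    obtain k where "N = m * k" using m_dvd_N by blast
    then have "(u + N * t) mod m = t mod m" using u(2) by (simp add: mult.assoc)
    moreover have "t \<le> u + N * t" using N_pos by (intro trans_le_add2) simp
    ultimately
    have "m dvd u + N * t - t" by (simp add: mod_eq_dvd_iff_nat)
    then obtain q where q: "u + N * t = t + m * q" using \<open>t \<le> u + N * t\<close>
      by (metis dvdE le_add_diff_inverse)
    have "T (m * q) (s * 0) (w ^ t) = w ^ (u + N * t)" by (simp add: T_power q add.commute)
    also have "\<dots> = x" using u by (simp add: power_add power_mult w_pow_N)
    finally show "x \<in> orbit (Kgrp m s) (w ^ t)" unfolding orbit_def Kgrp_def by blast
  qed
qed

lemma card_orbit_Kgrp: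
  assumes "v \<noteq> 0"
  shows "card (orbit (Kgrp m s) v) = N div m"
proof -
  obtain t where t: "v = w ^ t" using nonzero_is_power assms by blast
  have "inj_on (\<lambda>u. w ^ u) {u. u < N \<and> u mod m = t mod m}"
    by (rule inj_on_subset[OF w_pow_inj]) auto
  then show ?thesis
    unfolding t orbit_Kgrp_power using card_residue_class[OF m_dvd_N] m_pos by (simp add: card_image)
qed

lemma power_in_orbit_Kgrp: "w ^ u \<in> orbit (Kgrp m s) (w ^ t) \<longleftrightarrow> u mod m = t mod m"
proof -
  have "w ^ u \<in> orbit (Kgrp m s) (w ^ t) \<longleftrightarrow> (u mod N) mod m = t mod m"
    unfolding orbit_Kgrp_power using N_pos w_pow_mod[of u]
    by (auto simp: w_pow_eq_iff intro!: image_eqI[of _ _ "u mod N"])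
  then show ?thesis by (simp add: mod_mod_cancel[OF m_dvd_N])
qed

text \<open>The nonzero orbits correspond to the residues modulo m.\<close>
lemma card_nonzero_orbits_Kgrp: "card (nonzero_orbits (Kgrp m s)) = m"
proof -
  have "nonzero_orbits (Kgrp m s) = (\<lambda>c. orbit (Kgrp m s) (w ^ c)) ` {..<m}"
  proof
    show "nonzero_orbits (Kgrp m s) \<subseteq> (\<lambda>c. orbit (Kgrp m s) (w ^ c)) ` {..<m}"
    proof
      fix B assume "B \<in> nonzero_orbits (Kgrp m s)"
      then obtain t where "B = orbit (Kgrp m s) (w ^ t)"
        unfolding nonzero_orbits_def using nonzero_is_power by blast
      also have "\<dots> = orbit (Kgrp m s) (w ^ (t mod m))" unfolding orbit_Kgrp_power by simp
      finally show "B \<in> (\<lambda>c. orbit (Kgrp m s) (w ^ c)) ` {..<m}" using m_pos by auto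
    qed
  qed (auto simp: nonzero_orbits_def w_nonzero)
  moreover have "inj_on (\<lambda>c. orbit (Kgrp m s) (w ^ c)) {..<m}"
  proof (rule inj_onI)
    fix c c' assume "c \<in> {..<m}" "c' \<in> {..<m}"
      and "orbit (Kgrp m s) (w ^ c) = orbit (Kgrp m s) (w ^ c')"
    then show "c = c'" using power_in_orbit_Kgrp[of c c] power_in_orbit_Kgrp[of c c'] by simp
  qed
  ultimately show ?thesis by (simp add: card_image)
qed

lemma Kgrp_half_transitive: "half_transitive (Kgrp m s)"
  unfolding half_transitive_def using card_orbit_Kgrp by simp

text \<open>Orbit lengths N/m and 1 are prime to p, and p divides the order if p | d/s.\<close>
lemma Kgrp_exceptional:
  assumes "p dvd d div s"
  shows "p_exceptional p (Kgrp m s)"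
  unfolding p_exceptional_def
proof
  show "p dvd card (Kgrp m s)" using assms by (simp add: card_Kgrp)
  have coprime_orbit: "coprime (N div m) p"
    using coprime_N m_dvd_N by (metis coprime_mult_left_iff dvd_div_mult_self)
  have orbit_0: "orbit (Kgrp m s) 0 = {0}"
    using orbit_zero Kgrp_id subgroup.subset[OF Kgrp_subgroup[OF s_dvd]] by simp
  show "\<forall>v. coprime (card (orbit (Kgrp m s) v)) p"
  proof
    fix v :: 'a
    show "coprime (card (orbit (Kgrp m s) v)) p"
    proof (cases "v = 0")
      case True then show ?thesis using orbit_0 by simp
    next
      case False then show ?thesis using coprime_orbit card_orbit_Kgrp by simp
    qed
  qed
qed

end

lemma scalar_part:
  assumes H: "subgroup H (fgroup G)"
  obtains m where "m > 0" "m dvd N" "\<And>a. T a 0 \<in> H \<longleftrightarrow> m dvd a"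
proof -
  have "\<exists>m>0. m dvd N \<and> (\<forall>a. T a 0 \<in> H \<longleftrightarrow> m dvd a)"
  proof (rule periodic_additive_set[OF N_pos])
    show "T 0 0 \<in> H" using subgroupD(4)[OF H] by (simp add: T_id)
    show "T (a + b) 0 \<in> H" if "T a 0 \<in> H" "T b 0 \<in> H" for a b
      using subgroupD(5)[OF H that] by (simp add: T_comp)
    show "T a 0 \<in> H \<longleftrightarrow> T (a mod N) 0 \<in> H" for a
      using T_eq_iff[of a 0 "a mod N" 0] by simp
  qed
  then show ?thesis using that by blast
qed

text \<open>For v \<noteq> 0 an element of the stabiliser of v is determined by its Frobenius
  exponent modulo d, so the stabiliser is as large as the set of exponents occurring in it.\<close>
lemma card_stabilizer:
  assumes H: "subgroup H (fgroup G)" and "v \<noteq> 0"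
  shows "card {h \<in> H. h v = v} = card {i. i < d \<and> (\<exists>a. T a i \<in> H \<and> T a i v = v)}"
proof -
  define P where "P = {(a, i). a < N \<and> i < d \<and> T a i \<in> H \<and> T a i v = v}"
  have "{h \<in> H. h v = v} = (\<lambda>(a, i). T a i) ` P"
  proof
    show "{h \<in> H. h v = v} \<subseteq> (\<lambda>(a, i). T a i) ` P"
    proof
      fix h assume h: "h \<in> {h \<in> H. h v = v}"
      then obtain a i where "h = T a i" using subgroupD(1)[OF H] unfolding G_def by blast
      then have "h = T (a mod N) (i mod d)" using T_mod by simp
      then show "h \<in> (\<lambda>(a, i). T a i) ` P" using h N_pos d_pos unfolding P_def by force
    qed
  qed (auto simp: P_def)
  moreover have "inj_on (\<lambda>(a, i). T a i) P" by (auto simp: inj_on_def P_def T_eq_iff)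
  moreover have "inj_on snd P"
  proof (rule inj_onI)
    fix x y assume "x \<in> P" "y \<in> P" "snd x = snd y"
    then obtain a a' i where xy: "x = (a, i)" "y = (a', i)" "a < N" "a' < N"
      "T a i v = v" "T a' i v = v" unfolding P_def by auto
    then have "w ^ a * v ^ p ^ i = w ^ a' * v ^ p ^ i" by (simp add: T_def)
    then have "w ^ a = w ^ a'" using \<open>v \<noteq> 0\<close> by simp
    then show "x = y" using xy by (simp add: w_pow_eq_iff)
  qed
  moreover have "snd ` P = {i. i < d \<and> (\<exists>a. T a i \<in> H \<and> T a i v = v)}"
  proof
    show "{i. i < d \<and> (\<exists>a. T a i \<in> H \<and> T a i v = v)} \<subseteq> snd ` P"
    proof
      fix i assume "i \<in> {i. i < d \<and> (\<exists>a. T a i \<in> H \<and> T a i v = v)}"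
      then obtain a where "i < d" "T a i \<in> H" "T a i v = v" by blast
      moreover have "T a i = T (a mod N) i" using T_eq_iff by simp
      ultimately show "i \<in> snd ` P" using N_pos unfolding P_def by (force intro: image_eqI[of _ _ "(a mod N, i)"])
    qed
  qed (auto simp: P_def)
  ultimately show ?thesis by (metis card_image)
qed

text \<open>The Frobenius exponents occurring in the stabiliser of v \<noteq> 0 form a subgroup of the
  integers modulo d, hence are the multiples of a divisor r of d.\<close>
lemma stabilizer_exponents:
  assumes H: "subgroup H (fgroup G)" and "v \<noteq> 0"
  obtains r where "r > 0" "r dvd d" "card {h \<in> H. h v = v} = d div r"
    "\<And>i. (\<exists>a. T a i \<in> H \<and> T a i v = v) \<longleftrightarrow> r dvd i"
proof -
  have "\<exists>r>0. r dvd d \<and> (\<forall>i. (\<exists>a. T a i \<in> H \<and> T a i v = v) \<longleftrightarrow> r dvd i)"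
  proof (rule periodic_additive_set[OF d_pos])
    show "\<exists>a. T a 0 \<in> H \<and> T a 0 v = v" using subgroupD(4)[OF H] by (auto simp: T_id intro!: exI[of _ 0])
    show "\<exists>c. T c (i + j) \<in> H \<and> T c (i + j) v = v"
      if fix_i: "\<exists>a. T a i \<in> H \<and> T a i v = v" and fix_j: "\<exists>b. T b j \<in> H \<and> T b j v = v" for i j
    proof -
      obtain a b where "T a i \<in> H" "T a i v = v" "T b j \<in> H" "T b j v = v"
        using fix_i fix_j by blast
      then have "T a i \<circ> T b j \<in> H" "(T a i \<circ> T b j) v = v" using subgroupD(5)[OF H] by auto
      then show ?thesis unfolding T_comp by blast
    qed
    show "(\<exists>a. T a i \<in> H \<and> T a i v = v) \<longleftrightarrow> (\<exists>a. T a (i mod d) \<in> H \<and> T a (i mod d) v = v)" for i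
    proof -
      have "T a i = T a (i mod d)" for a by (simp add: T_eq_iff)
      then show ?thesis by simp
    qed
  qed
  then obtain r where r: "r > 0" "r dvd d" "\<And>i. (\<exists>a. T a i \<in> H \<and> T a i v = v) \<longleftrightarrow> r dvd i"
    by blast
  have "card {h \<in> H. h v = v} = card {i. i < d \<and> i mod r = 0}"
    using card_stabilizer[OF assms] r(3) by (simp add: dvd_eq_mod_eq_0)
  also have "\<dots> = d div r" using card_residue_class[OF r(2) r(1)] .
  finally show ?thesis using that r by blast
qed

lemma frobenius_multiples:
  assumes H: "subgroup H (fgroup G)" and "T 0 s \<in> H"
  shows "T 0 (s * c) \<in> H"
proof (induction c)
  case 0 show ?case using subgroupD(4)[OF H] T_id by (metis mult_0_right)
next
  case (Suc c)
  then have "T 0 s \<circ> T 0 (s * c) \<in> H" using subgroupD(5)[OF H] assms(2) by blast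
  then show ?case by (simp add: T_comp)
qed

lemma strip_frobenius:
  assumes H: "subgroup H (fgroup G)" and "T 0 s \<in> H" "s dvd d" "T a (s * q) \<in> H"
  shows "T a 0 \<in> H"
proof -
  obtain e where e: "d = s * e" using assms(3) by blast
  then have "e \<ge> 1" using d_pos by (cases e) auto
  have "T a (s * q) \<circ> T 0 (s * (q * (e - 1))) \<in> H"
    using subgroupD(5)[OF H assms(4) frobenius_multiples[OF H assms(2)]] .
  moreover have "s * q + s * (q * (e - 1)) = d * q"
    using e \<open>e \<ge> 1\<close> by (simp add: algebra_simps)
  ultimately show ?thesis using T_eq_iff[of a "d * q" a 0] by (simp add: T_comp)
qed

text \<open>First step for a p-exceptional H: the stabiliser of 1 consists of the Frobenius
  powers T 0 i with r dividing i; its order d/r carries the whole p-part p^k of the order of H,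
  and with d = p^k s the Frobenius power T 0 s lies in H.\<close>
lemma exceptional_frobenius:
  assumes H: "subgroup H (fgroup G)" and exc: "p_exceptional p H"
  obtains k s t where "k \<ge> 1" "d = p ^ k * s" "T 0 s \<in> H" "coprime t p"
    "card H = card (orbit H 1) * (p ^ k * t)"
proof -
  obtain r where r: "r > 0" "r dvd d" "card {h \<in> H. h 1 = 1} = d div r"
    and exps: "\<And>i. (\<exists>a. T a i \<in> H \<and> T a i 1 = 1) \<longleftrightarrow> r dvd i"
    using stabilizer_exponents[OF H one_neq_zero] by blast
  have "T a i 1 = 1 \<longleftrightarrow> T a i = T 0 i" for a i
  proof -
    have "T a i 1 = 1 \<longleftrightarrow> w ^ a = w ^ 0" by (simp add: T_def)
    then show ?thesis using w_pow_eq_iff[of a 0] by (simp add: T_eq_iff)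
  qed
  then have frob: "T 0 i \<in> H \<longleftrightarrow> r dvd i" for i using exps by metis
  define e where "e = d div r"
  have d_eq: "d = r * e" unfolding e_def using r(2) by simp
  have card_H: "card H = card (orbit H 1) * e"
    using orbit_stabilizer[OF subgroupD(2,3)[OF H], of 1] r(3) unfolding e_def by simp
  have "p dvd e"
    using exc card_H unfolding p_exceptional_def
    by (metis coprime_commute coprime_dvd_mult_right_iff)
  have "e \<noteq> 0" "\<not> is_unit p" using d_eq d_pos p_ge2 by auto
  define k where "k = multiplicity p e"
  define t where "t = e div p ^ k"
  have e_eq: "e = p ^ k * t"
    unfolding t_def k_def using multiplicity_dvd[of p e] by simp
  have "k \<ge> 1"
    using multiplicity_gt_zero_iff[OF \<open>e \<noteq> 0\<close> \<open>\<not> is_unit p\<close>] \<open>p dvd e\<close> unfolding k_def by simp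
  moreover have "coprime t p"
    using prime_imp_coprime[OF prime multiplicity_decompose[OF \<open>e \<noteq> 0\<close> \<open>\<not> is_unit p\<close>]]
    unfolding t_def k_def by (simp add: coprime_commute)
  moreover have "d = p ^ k * (r * t)" using d_eq e_eq by simp
  moreover have "T 0 (r * t) \<in> H" using frob by simp
  ultimately show ?thesis using that card_H e_eq by blast
qed

text \<open>Second step: the stabiliser of w also carries the p-part p^k, so its Frobenius
  exponents include s; i.e. some twisted Frobenius power T \<alpha> s in H fixes w.\<close>
lemma exceptional_twisted_frobenius:
  assumes H: "subgroup H (fgroup G)" and exc: "p_exceptional p H"
    and "p ^ k dvd card H" "d = p ^ k * s"
  obtains \<alpha> where "T \<alpha> s \<in> H" "T \<alpha> s w = w"
proof -
  obtain r where r: "r > 0" "r dvd d" "card {h \<in> H. h w = w} = d div r"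
    and exps: "\<And>i. (\<exists>a. T a i \<in> H \<and> T a i w = w) \<longleftrightarrow> r dvd i"
    using stabilizer_exponents[OF H w_nonzero] by blast
  have "p ^ k dvd d div r"
    using exceptional_stabilizer_p_part[OF exc subgroupD(2,3)[OF H] assms(3), of w] r(3) by simp
  then obtain c where "d div r = p ^ k * c" by blast
  then have "p ^ k * s = p ^ k * (r * c)" using assms(4) r(2) by (metis dvd_mult_div_cancel mult.left_commute)
  then have "r dvd s" using p_ge2 by simp
  then show ?thesis using exps that by blast
qed

lemma twist_exponent:
  assumes H: "subgroup H (fgroup G)" and scalar: "\<And>a. T a 0 \<in> H \<longleftrightarrow> m dvd a" and "m dvd N"
    and "T 0 s \<in> H" "s dvd d" "T \<alpha> s \<in> H" "T \<alpha> s w = w"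
  shows "m dvd p ^ s - 1"
proof -
  have "m dvd \<alpha>" using strip_frobenius[OF H assms(4,5), of \<alpha> 1] assms(6) scalar by simp
  have "w ^ (\<alpha> + p ^ s) = w ^ 1" using assms(7) T_power[of \<alpha> s 1] by simp
  then have "(\<alpha> + p ^ s) mod N mod m = 1 mod N mod m" by (simp only: w_pow_eq_iff)
  then have "(\<alpha> + p ^ s) mod m = 1 mod m" by (simp only: mod_mod_cancel[OF \<open>m dvd N\<close>])
  then have "p ^ s mod m = 1 mod m" using \<open>m dvd \<alpha>\<close> by (auto elim!: dvdE)
  moreover have "1 \<le> p ^ s" using p_ge2 by simp
  ultimately show ?thesis by (simp only: mod_eq_dvd_iff_nat)
qed

lemma Kgrp_eq_Int:
  assumes H: "subgroup H (fgroup G)" and scalar: "\<And>a. T a 0 \<in> H \<longleftrightarrow> m dvd a"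
    and "T 0 s \<in> H" "s dvd d"
  shows "Kgrp m s = H \<inter> Kgrp 1 s"
proof
  show "Kgrp m s \<subseteq> H \<inter> Kgrp 1 s"
  proof
    fix f assume "f \<in> Kgrp m s"
    then obtain a b where f: "f = T (m * a) (s * b)" unfolding Kgrp_def by blast
    have "T (m * a) 0 \<circ> T 0 (s * b) \<in> H"
      using subgroupD(5)[OF H] scalar frobenius_multiples[OF H assms(3)] by simp
    then show "f \<in> H \<inter> Kgrp 1 s" unfolding f Kgrp_def by (auto simp: T_comp)
  qed
  show "H \<inter> Kgrp 1 s \<subseteq> Kgrp m s"
  proof
    fix f assume f: "f \<in> H \<inter> Kgrp 1 s"
    then obtain a b where "f = T a (s * b)" unfolding Kgrp_def by auto
    moreover have "m dvd a" using strip_frobenius[OF H assms(3,4)] f scalar calculation by auto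
    ultimately show "f \<in> Kgrp m s" unfolding Kgrp_def by (auto elim!: dvdE)
  qed
qed

text \<open>Kgrp 1 s, the maps whose Frobenius exponent is a multiple of s, is normal in GammaL1:
  conjugation does not change the Frobenius exponent modulo d.\<close>
lemma Kgrp_one_normal:
  assumes "s dvd d"
  shows "Kgrp 1 s \<lhd> fgroup G"
proof -
  interpret G: group "fgroup G" by (rule group_G)
  have "x \<circ> h \<circ> inv\<^bsub>fgroup G\<^esub> x \<in> Kgrp 1 s" if x: "x \<in> G" and h: "h \<in> Kgrp 1 s" for x h
  proof -
    obtain b l where xe: "x = T b l" using x unfolding G_def by blast
    have "inv\<^bsub>fgroup G\<^esub> x \<in> G" using G.inv_closed x by simp
    then obtain c l' where ye: "inv\<^bsub>fgroup G\<^esub> x = T c l'" unfolding G_def by blast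
    obtain a q where he: "h = T a (s * q)" using h unfolding Kgrp_def by auto
    have "inv\<^bsub>fgroup G\<^esub> x \<circ> x = id" using G.l_inv x by simp
    then have "T (c + p ^ l' * b) (l' + l) = T 0 0" unfolding ye by (simp add: xe T_comp T_id)
    then have "d dvd l' + l" by (simp add: T_eq_iff mod_0_imp_dvd)
    then have "s dvd l + s * q + l'" using assms by (metis add.commute dvd_add dvd_trans dvd_triv_left add.assoc)
    then obtain f where "l + s * q + l' = s * f" by blast
    moreover have "x \<circ> h \<circ> inv\<^bsub>fgroup G\<^esub> x = T (b + p ^ l * a + p ^ (l + s * q) * c) (l + s * q + l')"
      unfolding ye by (simp add: xe he T_comp algebra_simps)
    ultimately show ?thesis unfolding Kgrp_def by auto
  qed
  then show ?thesis
    using G.normal_inv_iff Kgrp_subgroup[OF assms] by simp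
qed

lemma exceptional_structure:
  assumes H: "subgroup H (fgroup G)" and exc: "p_exceptional p H"
  obtains k s m where "k \<ge> 1" "d = p ^ k * s" "m dvd p ^ s - 1"
    "Kgrp m s \<lhd> fgroup H" "coprime (card H div card (Kgrp m s)) p"
proof -
  obtain k s t where k: "k \<ge> 1" and ds: "d = p ^ k * s" and frob: "T 0 s \<in> H"
    and t: "coprime t p" and card_H: "card H = card (orbit H 1) * (p ^ k * t)"
    using exceptional_frobenius[OF H exc] by blast
  have s_dvd: "s dvd d" using ds by simp
  obtain \<alpha> where twist: "T \<alpha> s \<in> H" "T \<alpha> s w = w"
    using exceptional_twisted_frobenius[OF H exc _ ds] card_H by auto
  obtain m where m: "m dvd N" and scalar: "\<And>a. T a 0 \<in> H \<longleftrightarrow> m dvd a"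
    using scalar_part[OF H] by blast
  have m_dvd: "m dvd p ^ s - 1" using twist_exponent[OF H scalar m frob s_dvd twist] .
  have "Kgrp m s = H \<inter> Kgrp 1 s" by (rule Kgrp_eq_Int[OF H scalar frob s_dvd])
  then have normal: "Kgrp m s \<lhd> fgroup H"
    using group.normal_Int_subgroup[OF group_G H Kgrp_one_normal[OF s_dvd]] by (simp add: Int_commute)
  have "card (Kgrp m s) dvd card H"
    using card_subgroup_dvd[OF subgroupD(2)[OF H] normal_imp_subgroup[OF normal]] .
  moreover have "card (Kgrp m s) = N div m * p ^ k"
  proof -
    have "d div s = p ^ k" using ds s_pos[OF m_dvd s_dvd] by simp
    then show ?thesis using card_Kgrp[OF m_dvd s_dvd] by simp
  qed
  ultimately have "(card H div card (Kgrp m s)) * (N div m) * p ^ k = card (orbit H 1) * t * p ^ k"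
    using card_H dvd_div_mult_self[of "card (Kgrp m s)" "card H"] by (simp add: ac_simps)
  then have "(card H div card (Kgrp m s)) * (N div m) = card (orbit H 1) * t"
    using p_ge2 by simp
  moreover have "coprime (card (orbit H 1) * t) p" using exc t unfolding p_exceptional_def by simp
  ultimately have "coprime (card H div card (Kgrp m s)) p" by (metis coprime_mult_left_iff)
  with k ds m_dvd normal show ?thesis using that by blast
qed

lemma Kgrp_mono: "m dvd m' \<Longrightarrow> s dvd s' \<Longrightarrow> Kgrp m' s' \<subseteq> Kgrp m s"
  unfolding Kgrp_def by (auto elim!: dvdE simp: mult.assoc) blast

lemma exceptional_examples:
  assumes "k \<ge> 1" "d = p ^ k * s" "j dvd p ^ s - 1"
  defines "K \<equiv> Kgrp ((p ^ s - 1) div j) s"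
  shows "p_exceptional p K" "half_transitive K" "card (nonzero_orbits K) = (p ^ s - 1) div j"
    "\<And>v. v \<noteq> 0 \<Longrightarrow> card (orbit K v) = j * (p ^ d - 1) div (p ^ s - 1)"
    "\<And>L. subgroup L (fgroup G) \<Longrightarrow> K \<subseteq> L \<Longrightarrow> coprime (card L div card K) p \<Longrightarrow> p_exceptional p L"
    "Kgrp (p ^ (d div p) - 1) (d div p) \<subseteq> K"
    "p_exceptional p (Kgrp (p ^ (d div p) - 1) (d div p))"
proof -
  define m where "m = (p ^ s - 1) div j"
  have m: "m dvd p ^ s - 1" and mj: "p ^ s - 1 = m * j" using assms(3) unfolding m_def by auto
  have s_dvd: "s dvd d" using assms(2) by simp
  have "p dvd p ^ k" using assms(1) by (simp add: dvd_power)
  then have "p dvd d div s" using assms(2) s_pos[OF m s_dvd] by simp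
  then show exc: "p_exceptional p K"
    unfolding K_def m_def[symmetric] by (rule Kgrp_exceptional[OF m s_dvd])
  show "half_transitive K"
    unfolding K_def m_def[symmetric] by (rule Kgrp_half_transitive[OF m s_dvd])
  show "card (nonzero_orbits K) = (p ^ s - 1) div j"
    unfolding K_def m_def[symmetric] by (rule card_nonzero_orbits_Kgrp[OF m s_dvd])
  have "j > 0" using mj p_pow_s_pos[OF m s_dvd] by (cases j) auto
  then have "j * (p ^ d - 1) div (p ^ s - 1) = N div m" unfolding mj N_def by simp
  then show "card (orbit K v) = j * (p ^ d - 1) div (p ^ s - 1)" if "v \<noteq> 0" for v
    unfolding K_def m_def[symmetric] using card_orbit_Kgrp[OF m s_dvd that] by simp
  show "p_exceptional p L"
    if L: "subgroup L (fgroup G)" and "K \<subseteq> L" "coprime (card L div card K) p" for L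
    using exceptional_overgroup[OF subgroupD(2,3)[OF L] _ that(3) exc]
      group.subgroup_incl[OF group_G Kgrp_subgroup[OF s_dvd] L] that(2) unfolding K_def by simp
  obtain k' where k': "k = Suc k'" using assms(1) by (cases k) auto
  then have dp: "d div p = p ^ k' * s" using assms(2) p_ge2 by simp
  have "p ^ (d div p) = (p ^ s) ^ (p ^ k')" unfolding dp by (simp add: mult.commute power_mult)
  then have "p ^ s - 1 dvd p ^ (d div p) - 1" using pred_dvd_pred_power[of "p ^ s" "p ^ k'"] by simp
  then show "Kgrp (p ^ (d div p) - 1) (d div p) \<subseteq> K"
    unfolding K_def m_def[symmetric] using Kgrp_mono[OF dvd_trans[OF m]] dp by simp
  have "d = p * (d div p)" using dp k' assms(2) by simp
  then have "d div p dvd d" "d div (d div p) = p"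
    using d_pos
    by (metis dvd_triv_right, metis mult_zero_right nonzero_mult_div_cancel_right less_irrefl)
  then show "p_exceptional p (Kgrp (p ^ (d div p) - 1) (d div p))"
    using Kgrp_exceptional[OF dvd_refl] by simp
qed

end

theorem lemma2p7:
  fixes p d :: nat and \<omega> :: "'a::{field, finite}"
  assumes "Factorial_Ring.prime p" and "card (UNIV :: 'a set) = p ^ d" and "primitive_element \<omega>"
  shows
   "(\<forall>H. subgroup H (fgroup (GammaL1 p \<omega>)) \<and> p_exceptional p H \<longrightarrow>
        p dvd d \<and>
        (\<exists>k s j. k \<ge> 1 \<and> d = p ^ k * s \<and> j dvd p ^ s - 1 \<and>
           (let K = gen {omega_hat \<omega> ^^ ((p ^ s - 1) div j), frob p ^^ s}
            in K \<lhd> fgroup H \<and> coprime (card H div card K) p)))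
    \<and>
    (\<forall>k s j. k \<ge> 1 \<and> d = p ^ k * s \<and> j dvd p ^ s - 1 \<longrightarrow>
        (let K = gen {omega_hat \<omega> ^^ ((p ^ s - 1) div j), frob p ^^ s}
         in p_exceptional p K \<and> half_transitive K
            \<and> card (nonzero_orbits K) = (p ^ s - 1) div j
            \<and> (\<forall>v::'a. v \<noteq> 0 \<longrightarrow> card (orbit K v) = j * (p ^ d - 1) div (p ^ s - 1))
            \<and> (\<forall>L. subgroup L (fgroup (GammaL1 p \<omega>)) \<and> K \<subseteq> L
                   \<and> coprime (card L div card K) p
                   \<and> L \<inter> gen {omega_hat \<omega>} = K \<inter> gen {omega_hat \<omega>}
                   \<longrightarrow> p_exceptional p L)
            \<and> gen {omega_hat \<omega> ^^ (p ^ (d div p) - 1), frob p ^^ (d div p)} \<subseteq> K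
            \<and> p_exceptional p (gen {omega_hat \<omega> ^^ (p ^ (d div p) - 1), frob p ^^ (d div p)})))"
proof -
  interpret frobenius_field p d \<omega> using assms by unfold_locales
  have gen_eq: "gen {omega_hat \<omega> ^^ a, frob p ^^ i} = Kgrp a i" for a i
    by (simp add: omega_hat_pow frob_pow gen_T)
  show ?thesis
    unfolding Let_def gen_eq GammaL1_eq
  proof (intro conjI allI impI; elim conjE)
    fix H assume "subgroup H (fgroup G)" "p_exceptional p H"
    then obtain k s m where k: "k \<ge> 1" "d = p ^ k * s" and m: "m dvd p ^ s - 1"
      and K: "Kgrp m s \<lhd> fgroup H" "coprime (card H div card (Kgrp m s)) p"
      by (rule exceptional_structure)
    show "p dvd d" using k by (simp add: dvd_power)
    have "s dvd d" using k(2) by simp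
    show "\<exists>k s j. 1 \<le> k \<and> d = p ^ k * s \<and> j dvd p ^ s - 1 \<and>
        Kgrp ((p ^ s - 1) div j) s \<lhd> fgroup H \<and>
        coprime (card H div card (Kgrp ((p ^ s - 1) div j) s)) p"
      using k K divisor_quotient[OF m p_pow_s_pos[OF m \<open>s dvd d\<close>]]
      by (intro exI[of _ k] exI[of _ s] exI[of _ "(p ^ s - 1) div m"]) auto
  qed (rule exceptional_examples; assumption)+
qed

end
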